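(* Let $A\in \mathrm{Mat}_{m\times n}(\mathbb{C})$ have rank $r\ge 1$, let $A^+$ be its Moore–Penrose pseudoinverse (if $A=U\Sigma V^*$ is a thin singular value decomposition with $\Sigma=\mathrm{diag}(\sigma_1,\dots,\sigma_r)$, then $A^+=V\Sigma^{-1}U^*$), let $\mathbb{U}\subseteq\mathbb{C}^m$ be the column space of $A$ and $\mathbb{V}\subseteq\mathbb{C}^n$ the column space of $A^T$. Then the decomposition locus of $A$ is \[ \mathcal{D}_A=\{(\mathbf{u},\mathbf{v})\in \mathbb{U}\times\mathbb{V} \;:\; \mathbf{v}^T A^+\mathbf{u}\neq 0\}. \]
   Context: A matrix $A\in\mathbb{C}^m\otimes\mathbb{C}^n$ is identified with a tensor, and $\mathbf{u}\otimes\mathbf{v}$ with the rank-one matrix $\mathbf{u}\mathbf{v}^T$. The rank $\mathrm{rk}(T)$ of a tensor $T\in\mathbb{C}^{n_1}\otimes\cdots\otimes\mathbb{C}^{n_k}$ is the minimal $r$ such that $T$ is a sum of $r$ tensors of the form $\mathbf{v}^1\otimes\cdots\otimes\mathbf{v}^k$. The decomposition locus of $T$ is $\mathcal{D}_T=\{(\mathbf{v}^1,\dots,\mathbf{v}^k)\in\mathbb{C}^{n_1}\times\cdots\times\mathbb{C}^{n_k} : \mathrm{rk}(T-\lambda\,\mathbf{v}^1\otimes\cdots\otimes\mathbf{v}^k)=\mathrm{rk}(T)-1 \text{ for some }\lambda\in\mathbb{C}\}$; the forbidden locus $\mathcal{F}_T$ is its complement. *)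

theory Defs
  imports "Jordan_Normal_Form.Schur_Decomposition"
begin

text \<open>Matrices are JNF matrices of type complex mat; a vector u in C^m is a complex vec in
  carrier_vec m.  The tensor u (x) v is the rank-one matrix u v^T.\<close>

definition outer :: "complex vec \<Rightarrow> complex vec \<Rightarrow> complex mat" where
  "outer u v = mat (dim_vec u) (dim_vec v) (\<lambda>(i,j). u $ i * v $ j)"

definition tensor_rank :: "complex mat \<Rightarrow> nat" where
  "tensor_rank A = (LEAST r. \<exists>us vs.
      (\<forall>k<r. us k \<in> carrier_vec (dim_row A) \<and> vs k \<in> carrier_vec (dim_col A)) \<and>
      A = mat (dim_row A) (dim_col A) (\<lambda>(i,j). \<Sum>k<r. (outer (us k) (vs k)) $$ (i,j)))"

definition decomposition_locus :: "complex mat \<Rightarrow> (complex vec \<times> complex vec) set" where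
  "decomposition_locus A = {(u,v). u \<in> carrier_vec (dim_row A) \<and> v \<in> carrier_vec (dim_col A) \<and>
      (\<exists>c::complex. tensor_rank (A - c \<cdot>\<^sub>m outer u v) = tensor_rank A - 1)}"

definition forbidden_locus :: "complex mat \<Rightarrow> (complex vec \<times> complex vec) set" where
  "forbidden_locus A = (carrier_vec (dim_row A) \<times> carrier_vec (dim_col A)) - decomposition_locus A"

definition column_space :: "complex mat \<Rightarrow> complex vec set" where
  "column_space A = {A *\<^sub>v x | x. x \<in> carrier_vec (dim_col A)}"

definition is_pinv_svd :: "complex mat \<Rightarrow> complex mat \<Rightarrow> bool" where
  "is_pinv_svd A P = (\<exists>r U V \<sigma>.
      U \<in> carrier_mat (dim_row A) r \<and> V \<in> carrier_mat (dim_col A) r \<and>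
      mat_adjoint U * U = 1\<^sub>m r \<and> mat_adjoint V * V = 1\<^sub>m r \<and>
      (\<forall>i<r. \<sigma> i > (0::real)) \<and>
      A = U * mat r r (\<lambda>(i,j). if i = j then complex_of_real (\<sigma> i) else 0) * mat_adjoint V \<and>
      P = V * mat r r (\<lambda>(i,j). if i = j then complex_of_real (1 / \<sigma> i) else 0) * mat_adjoint U)"

end

theory Submission
  imports Defs
begin

text \<open>
  A linear
  relation with a nonzero coefficient among the \<open>v\<^sub>k\<close> (or among the \<open>u\<^sub>k\<close>) lets one term be
  absorbed into the others. Hence in a minimal decomposition every \<open>u\<^sub>k\<close> is fixed by \<open>A P\<close> for
  any generalized inverse \<open>P\<close> (\<open>A P A = A\<close>), i.e. lies in the column space.

  If \<open>rk (A - c u v\<^sup>T) = rk A - 1\<close>, then appending \<open>(c u, v)\<close> to a minimal decomposition of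
  \<open>A - c u v\<^sup>T\<close> gives a minimal one of \<open>A\<close>, so \<open>u\<close> and \<open>v\<close> lie in the column spaces. Writing
  \<open>v = A\<^sup>T b\<close>, one has \<open>v\<^sup>T P u = b\<^sup>T u\<close>, and \<open>b\<^sup>T u = 0\<close> would give
  \<open>(I + c u b\<^sup>T) (A - c u v\<^sup>T) = A\<close>, contradicting the rank drop. Conversely, if \<open>u = A a\<close> and
  \<open>b\<^sup>T u \<noteq> 0\<close>, then \<open>I - u b\<^sup>T / b\<^sup>T u\<close> annihilates \<open>u\<close> and maps \<open>A\<close> to
  \<open>A - u v\<^sup>T / b\<^sup>T u\<close>, whose rank is therefore smaller.
\<close>

definition is_outer_decomp ::
    "complex mat \<Rightarrow> 'i set \<Rightarrow> ('i \<Rightarrow> complex vec) \<Rightarrow> ('i \<Rightarrow> complex vec) \<Rightarrow> bool" where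
  "is_outer_decomp A K us vs \<longleftrightarrow> finite K \<and>
    (\<forall>k\<in>K. us k \<in> carrier_vec (dim_row A) \<and> vs k \<in> carrier_vec (dim_col A)) \<and>
    (\<forall>i<dim_row A. \<forall>j<dim_col A. A $$ (i,j) = (\<Sum>k\<in>K. us k $ i * vs k $ j))"

lemma index_outer [simp]:
  "i < dim_vec u \<Longrightarrow> j < dim_vec v \<Longrightarrow> outer u v $$ (i,j) = u $ i * v $ j"
  by (simp add: outer_def)

lemma dim_row_outer [simp]: "dim_row (outer u v) = dim_vec u"
  by (simp add: outer_def)

lemma dim_col_outer [simp]: "dim_col (outer u v) = dim_vec v"
  by (simp add: outer_def)

lemma outer_carrier [simp]:
  "u \<in> carrier_vec m \<Longrightarrow> v \<in> carrier_vec n \<Longrightarrow> outer u v \<in> carrier_mat m n"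
  by (intro carrier_matI) auto

lemma row_outer: "i < dim_vec u \<Longrightarrow> row (outer u v) i = u $ i \<cdot>\<^sub>v v"
  by (intro eq_vecI) simp_all

lemma outer_mult_vec:
  assumes "w \<in> carrier_vec (dim_vec v)"
  shows "outer u v *\<^sub>v w = (v \<bullet> w) \<cdot>\<^sub>v u"
proof -
  have "dim_vec w = dim_vec v" using assms by (rule carrier_vecD)
  then show ?thesis by (intro eq_vecI) (simp_all add: row_outer mult.commute)
qed

lemma outer_mult_mat:
  assumes B: "B \<in> carrier_mat (dim_vec v) n"
  shows "outer u v * B = outer u (transpose_mat B *\<^sub>v v)"
proof (rule eq_matI)
  fix i l assume "i < dim_row (outer u (transpose_mat B *\<^sub>v v))"
    and "l < dim_col (outer u (transpose_mat B *\<^sub>v v))"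
  then have i: "i < dim_vec u" and l: "l < n" using B by auto
  have "v \<bullet> col B l = col B l \<bullet> v"
    using B l by (intro comm_scalar_prod[of _ "dim_vec v"]) auto
  then show "(outer u v * B) $$ (i,l) = outer u (transpose_mat B *\<^sub>v v) $$ (i,l)"
    using i l B by (simp add: row_outer)
qed (use B in auto)

lemma smult_outer: "c \<cdot>\<^sub>m outer u v = outer (c \<cdot>\<^sub>v u) v"
  by (intro eq_matI) (simp_all add: mult.assoc)

lemma transpose_outer: "transpose_mat (outer u v) = outer v u"
  by (intro eq_matI) (simp_all add: mult.commute)

lemma tensor_rank_Least_outer_decomp:
  "tensor_rank A = (LEAST r. \<exists>us vs. is_outer_decomp A {..<r} us vs)"
proof -
  have "(\<forall>k<r. us k \<in> carrier_vec (dim_row A) \<and> vs k \<in> carrier_vec (dim_col A)) \<and>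
      A = mat (dim_row A) (dim_col A) (\<lambda>(i,j). \<Sum>k<r. outer (us k) (vs k) $$ (i,j)) \<longleftrightarrow>
    is_outer_decomp A {..<r} us vs" for r :: nat and us vs
  proof (cases "\<forall>k<r. us k \<in> carrier_vec (dim_row A) \<and> vs k \<in> carrier_vec (dim_col A)")
    case True
    have "outer (us k) (vs k) $$ (i,j) = us k $ i * vs k $ j"
      if "k < r" "i < dim_row A" "j < dim_col A" for k i j
    proof -
      have "dim_vec (us k) = dim_row A" "dim_vec (vs k) = dim_col A"
        using True that(1) by (auto intro: carrier_vecD)
      then show ?thesis using that(2,3) by simp
    qed
    then have "mat (dim_row A) (dim_col A) (\<lambda>(i,j). \<Sum>k<r. outer (us k) (vs k) $$ (i,j)) =
        mat (dim_row A) (dim_col A) (\<lambda>(i,j). \<Sum>k<r. us k $ i * vs k $ j)"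
      by (intro cong_mat refl) auto
    with True show ?thesis by (auto simp: is_outer_decomp_def mat_eq_iff)
  next
    case False
    then show ?thesis by (auto simp: is_outer_decomp_def)
  qed
  then show ?thesis unfolding tensor_rank_def by simp
qed

lemma is_outer_decomp_cols: "is_outer_decomp A {..<dim_col A} (col A) (unit_vec (dim_col A))"
proof -
  have "(\<Sum>k<dim_col A. col A k $ i * unit_vec (dim_col A) k $ j) =
      (\<Sum>k<dim_col A. if k = j then A $$ (i,j) else 0)"
    if "i < dim_row A" "j < dim_col A" for i j
    using that by (intro sum.cong) (auto simp: unit_vec_def)
  then show ?thesis by (simp add: is_outer_decomp_def)
qed

lemma tensor_rank_le_card:
  assumes d: "is_outer_decomp A K us vs"
  shows "tensor_rank A \<le> card K"
proof -
  from d obtain h where h: "bij_betw h {..<card K} K"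
    using ex_bij_betw_nat_finite unfolding is_outer_decomp_def atLeast0LessThan by blast
  have "(\<Sum>k\<in>K. us k $ i * vs k $ j) = (\<Sum>k<card K. (us \<circ> h) k $ i * (vs \<circ> h) k $ j)" for i j
    using sum.reindex_bij_betw[OF h, of "\<lambda>k. us k $ i * vs k $ j"] by simp
  then have "is_outer_decomp A {..<card K} (us \<circ> h) (vs \<circ> h)"
    using d bij_betw_apply[OF h] unfolding is_outer_decomp_def by auto
  then show ?thesis unfolding tensor_rank_Least_outer_decomp by (auto intro: Least_le)
qed

lemma obtain_minimal_outer_decomp:
  obtains us vs where "is_outer_decomp A {..<tensor_rank A} us vs"
  using LeastI_ex[of "\<lambda>r. \<exists>us vs. is_outer_decomp A {..<r} us vs"] is_outer_decomp_cols
  unfolding tensor_rank_Least_outer_decomp by blast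

lemma is_outer_decomp_transpose:
  "is_outer_decomp A K us vs \<Longrightarrow> is_outer_decomp (transpose_mat A) K vs us"
  by (auto simp: is_outer_decomp_def mult.commute)

lemma tensor_rank_transpose_le: "tensor_rank (transpose_mat A) \<le> tensor_rank A"
proof -
  obtain us vs where "is_outer_decomp A {..<tensor_rank A} us vs"
    by (rule obtain_minimal_outer_decomp)
  from tensor_rank_le_card[OF is_outer_decomp_transpose[OF this]] show ?thesis by simp
qed

lemma tensor_rank_transpose: "tensor_rank (transpose_mat A) = tensor_rank A"
  using tensor_rank_transpose_le[of A] tensor_rank_transpose_le[of "transpose_mat A"] by simp

lemma is_outer_decomp_mult_left:
  assumes d: "is_outer_decomp A K us vs" and T: "T \<in> carrier_mat p (dim_row A)"
  shows "is_outer_decomp (T * A) K (\<lambda>k. T *\<^sub>v us k) vs"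
proof -
  have "(T * A) $$ (i,j) = (\<Sum>k\<in>K. (T *\<^sub>v us k) $ i * vs k $ j)" if i: "i < p" and j: "j < dim_col A" for i j
  proof -
    have "(T * A) $$ (i,j) = (\<Sum>t<dim_row A. T $$ (i,t) * (\<Sum>k\<in>K. us k $ t * vs k $ j))"
      using d i j T by (auto simp: is_outer_decomp_def scalar_prod_def atLeast0LessThan intro!: sum.cong)
    also have "\<dots> = (\<Sum>k\<in>K. (\<Sum>t<dim_row A. T $$ (i,t) * us k $ t) * vs k $ j)"
      by (simp add: sum_distrib_left sum_distrib_right mult.assoc sum.swap[of _ K])
    also have "\<dots> = (\<Sum>k\<in>K. (T *\<^sub>v us k) $ i * vs k $ j)"
      using d i T by (intro sum.cong) (auto simp: is_outer_decomp_def scalar_prod_def atLeast0LessThan)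
    finally show ?thesis .
  qed
  then show ?thesis using d T by (auto simp: is_outer_decomp_def)
qed

lemma tensor_rank_mult_left_le:
  assumes "T \<in> carrier_mat p (dim_row A)"
  shows "tensor_rank (T * A) \<le> tensor_rank A"
proof -
  obtain us vs where "is_outer_decomp A {..<tensor_rank A} us vs"
    by (rule obtain_minimal_outer_decomp)
  from tensor_rank_le_card[OF is_outer_decomp_mult_left[OF this assms]] show ?thesis by simp
qed

lemma is_outer_decomp_mult_vec:
  assumes d: "is_outer_decomp A K us vs" and a: "a \<in> carrier_vec (dim_col A)" and i: "i < dim_row A"
  shows "(A *\<^sub>v a) $ i = (\<Sum>k\<in>K. us k $ i * (vs k \<bullet> a))"
proof -
  have "(A *\<^sub>v a) $ i = (\<Sum>j<dim_col A. (\<Sum>k\<in>K. us k $ i * vs k $ j) * a $ j)"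
    using d i a by (auto simp: is_outer_decomp_def scalar_prod_def atLeast0LessThan intro!: sum.cong)
  also have "\<dots> = (\<Sum>k\<in>K. us k $ i * (vs k \<bullet> a))"
    using a by (simp add: scalar_prod_def atLeast0LessThan sum_distrib_left sum_distrib_right
        mult.assoc sum.swap[of _ K])
  finally show ?thesis .
qed

lemma is_outer_decomp_insert:
  assumes d: "is_outer_decomp (A - outer x y) K us vs" and s: "s \<notin> K"
    and x: "x \<in> carrier_vec (dim_row A)" and y: "y \<in> carrier_vec (dim_col A)"
  shows "is_outer_decomp A (insert s K) (us(s := x)) (vs(s := y))"
proof -
  have "(\<Sum>k\<in>K. (us(s := x)) k $ i * (vs(s := y)) k $ j) = (\<Sum>k\<in>K. us k $ i * vs k $ j)" for i j
    using s by (intro sum.cong) auto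
  then show ?thesis using d s x y by (auto simp: is_outer_decomp_def diff_eq_eq)
qed

lemma tensor_rank_le_Suc_minus_outer:
  assumes "x \<in> carrier_vec (dim_row A)" and "y \<in> carrier_vec (dim_col A)"
  shows "tensor_rank A \<le> Suc (tensor_rank (A - outer x y))"
proof -
  let ?r = "tensor_rank (A - outer x y)"
  obtain us vs where "is_outer_decomp (A - outer x y) {..<?r} us vs"
    by (rule obtain_minimal_outer_decomp)
  from tensor_rank_le_card[OF is_outer_decomp_insert[OF this _ assms, of ?r]]
  show ?thesis by (simp add: lessThan_Suc[symmetric])
qed

lemma is_outer_decomp_dim:
  assumes "is_outer_decomp A K us vs" and "k \<in> K"
  shows "dim_vec (us k) = dim_row A" and "dim_vec (vs k) = dim_col A"
  using assms unfolding is_outer_decomp_def by (meson carrier_vecD)+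

lemma is_outer_decomp_remove:
  assumes d: "is_outer_decomp A K us vs" and j: "j \<in> K" and lam_j: "lam j \<noteq> 0"
    and dep: "\<And>l. l < dim_col A \<Longrightarrow> (\<Sum>k\<in>K. lam k * vs k $ l) = 0"
  shows "is_outer_decomp A (K - {j}) (\<lambda>k. us k - (lam k / lam j) \<cdot>\<^sub>v us j) vs"
proof -
  have fin: "finite K" using d by (simp add: is_outer_decomp_def)
  have "A $$ (i,l) = (\<Sum>k\<in>K - {j}. (us k - (lam k / lam j) \<cdot>\<^sub>v us j) $ i * vs k $ l)"
    if i: "i < dim_row A" and l: "l < dim_col A" for i l
  proof -
    have "(\<Sum>k\<in>K - {j}. (us k - (lam k / lam j) \<cdot>\<^sub>v us j) $ i * vs k $ l)
        = (\<Sum>k\<in>K - {j}. us k $ i * vs k $ l - us j $ i / lam j * (lam k * vs k $ l))"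
      using is_outer_decomp_dim(1)[OF d] i j
      by (intro sum.cong) (auto simp: divide_inverse algebra_simps)
    also have "\<dots> = (\<Sum>k\<in>K - {j}. us k $ i * vs k $ l) - us j $ i / lam j * (\<Sum>k\<in>K - {j}. lam k * vs k $ l)"
      by (simp add: sum_subtractf sum_distrib_left)
    also have "(\<Sum>k\<in>K - {j}. lam k * vs k $ l) = - (lam j * vs j $ l)"
      using dep[OF l] sum.remove[OF fin j, of "\<lambda>k. lam k * vs k $ l"] by (simp add: eq_neg_iff_add_eq_0 add.commute)
    also have "(\<Sum>k\<in>K - {j}. us k $ i * vs k $ l) = A $$ (i,l) - us j $ i * vs j $ l"
      using d i l sum.remove[OF fin j, of "\<lambda>k. us k $ i * vs k $ l"] by (simp add: is_outer_decomp_def)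
    finally show ?thesis using lam_j by simp
  qed
  then show ?thesis using d j by (auto simp: is_outer_decomp_def)
qed

lemma tensor_rank_less_card_if_dependent_right:
  assumes "is_outer_decomp A K us vs" and "j \<in> K" and "lam j \<noteq> 0"
    and "\<And>l. l < dim_col A \<Longrightarrow> (\<Sum>k\<in>K. lam k * vs k $ l) = 0"
  shows "tensor_rank A < card K"
proof -
  have "finite K" using assms(1) by (simp add: is_outer_decomp_def)
  then have "card (K - {j}) < card K" using assms(2) by (rule card_Diff1_less)
  with tensor_rank_le_card[OF is_outer_decomp_remove[OF assms]] show ?thesis by simp
qed

lemma tensor_rank_less_card_if_dependent_left:
  assumes "is_outer_decomp A K us vs" and "j \<in> K" and "lam j \<noteq> 0"
    and "\<And>i. i < dim_row A \<Longrightarrow> (\<Sum>k\<in>K. lam k * us k $ i) = 0"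
  shows "tensor_rank A < card K"
  using tensor_rank_less_card_if_dependent_right[where lam = lam,
      OF is_outer_decomp_transpose[OF assms(1)] assms(2,3)] assms(4) tensor_rank_transpose by simp

definition is_generalized_inverse :: "'a :: semiring_1 mat \<Rightarrow> 'a mat \<Rightarrow> bool" where
  "is_generalized_inverse A P \<longleftrightarrow> P \<in> carrier_mat (dim_col A) (dim_row A) \<and> A * P * A = A"

lemma is_generalized_inverse_transpose:
  fixes A P :: "'a :: comm_semiring_1 mat"
  assumes "is_generalized_inverse A P"
  shows "is_generalized_inverse (transpose_mat A) (transpose_mat P)"
proof -
  have A: "A \<in> carrier_mat (dim_row A) (dim_col A)" and P: "P \<in> carrier_mat (dim_col A) (dim_row A)"
    and APA: "A * P * A = A"
    using assms by (auto simp: is_generalized_inverse_def)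
  have "transpose_mat A = transpose_mat (A * P * A)" using APA by simp
  also have "\<dots> = transpose_mat A * transpose_mat (A * P)"
    using A P by (intro transpose_mult) auto
  also have "transpose_mat (A * P) = transpose_mat P * transpose_mat A"
    using A P by (intro transpose_mult) auto
  also have "transpose_mat A * (transpose_mat P * transpose_mat A) =
      transpose_mat A * transpose_mat P * transpose_mat A"
    using A P by (intro assoc_mult_mat[symmetric]) auto
  finally show ?thesis using P by (simp add: is_generalized_inverse_def)
qed

lemma mat_adjoint_carrier: "U \<in> carrier_mat m r \<Longrightarrow> mat_adjoint U \<in> carrier_mat r m"
  using mat_of_rows_carrier(1)[of m "map conjugate (cols U)"] by (simp add: mat_adjoint_def)

lemma diag_mult_diag_eq_one:
  fixes d e :: "nat \<Rightarrow> 'a :: semiring_1"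
  assumes "\<And>i. i < r \<Longrightarrow> d i * e i = 1"
  shows "mat r r (\<lambda>(i,j). if i = j then d i else 0) * mat r r (\<lambda>(i,j). if i = j then e i else 0)
    = 1\<^sub>m r"
proof (rule eq_matI)
  fix i j assume i: "i < dim_row (1\<^sub>m r)" and j: "j < dim_col (1\<^sub>m r)"
  have "(\<Sum>t<r. (if i = t then d i else 0) * (if t = j then e t else 0)) =
      (\<Sum>t<r. if t = i then (if i = j then 1 else 0) else 0)"
    using assms i by (intro sum.cong) auto
  then show "(mat r r (\<lambda>(i,j). if i = j then d i else 0) *
      mat r r (\<lambda>(i,j). if i = j then e i else 0)) $$ (i,j) = 1\<^sub>m r $$ (i,j)"
    using i j by (simp add: scalar_prod_def atLeast0LessThan)
qed auto

lemma mult_left_inverse_cancel: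
  fixes W V X :: "'a :: semiring_1 mat"
  assumes "W \<in> carrier_mat r a" and "V \<in> carrier_mat a r" and "W * V = 1\<^sub>m r"
    and "X \<in> carrier_mat r k"
  shows "W * (V * X) = X"
proof -
  have "W * (V * X) = (W * V) * X" using assms by (intro assoc_mult_mat[symmetric]) auto
  then show ?thesis using assms(3) left_mult_one_mat[OF assms(4)] by simp
qed

lemma is_pinv_svd_generalized_inverse:
  assumes "is_pinv_svd A P"
  shows "is_generalized_inverse A P"
proof -
  from assms obtain r U V \<sigma> where U: "U \<in> carrier_mat (dim_row A) r"
    and V: "V \<in> carrier_mat (dim_col A) r"
    and UU: "mat_adjoint U * U = 1\<^sub>m r" and VV: "mat_adjoint V * V = 1\<^sub>m r"
    and pos: "\<forall>i<r. \<sigma> i > (0::real)"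
    and A_eq: "A = U * mat r r (\<lambda>(i,j). if i = j then complex_of_real (\<sigma> i) else 0) * mat_adjoint V"
    and P_eq: "P = V * mat r r (\<lambda>(i,j). if i = j then complex_of_real (1 / \<sigma> i) else 0) * mat_adjoint U"
    unfolding is_pinv_svd_def by blast
  define S where "S = mat r r (\<lambda>(i,j). if i = j then complex_of_real (\<sigma> i) else 0)"
  define S' where "S' = mat r r (\<lambda>(i,j). if i = j then complex_of_real (1 / \<sigma> i) else 0)"
  have S: "S \<in> carrier_mat r r" and S': "S' \<in> carrier_mat r r" by (simp_all add: S_def S'_def)
  have U': "mat_adjoint U \<in> carrier_mat r (dim_row A)" and V': "mat_adjoint V \<in> carrier_mat r (dim_col A)"
    using U V by (simp_all add: mat_adjoint_carrier)
  have SS': "S * S' = 1\<^sub>m r"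
  proof -
    have "complex_of_real (\<sigma> i) * complex_of_real (1 / \<sigma> i) = 1" if "i < r" for i
    proof -
      have "\<sigma> i \<noteq> 0" using pos that by force
      then show ?thesis by (simp flip: of_real_mult)
    qed
    then show ?thesis unfolding S_def S'_def by (rule diag_mult_diag_eq_one)
  qed
  have A_eq': "A = U * S * mat_adjoint V" and P_eq': "P = V * S' * mat_adjoint U"
    using A_eq P_eq by (simp_all add: S_def S'_def)
  have "A * P = U * (S * (mat_adjoint V * (V * (S' * mat_adjoint U))))"
    unfolding A_eq' P_eq' using U S V' V S' U'
    by (simp add: assoc_mult_mat[of U "dim_row A" r "S * mat_adjoint V" "dim_col A"
        "V * (S' * mat_adjoint U)" "dim_row A"]
        assoc_mult_mat[of S r r "mat_adjoint V" "dim_col A" "V * (S' * mat_adjoint U)" "dim_row A"])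
  also have "mat_adjoint V * (V * (S' * mat_adjoint U)) = S' * mat_adjoint U"
    using V' V VV S' U' by (rule mult_left_inverse_cancel[OF _ _ _ mult_carrier_mat])
  also have "S * (S' * mat_adjoint U) = mat_adjoint U"
    using S S' U' SS' by (simp add: assoc_mult_mat[symmetric, of S r r S' r "mat_adjoint U"])
  finally have AP: "A * P = U * mat_adjoint U" .
  have "A * P * A = U * mat_adjoint U * A" by (simp only: AP)
  also have "\<dots> = U * (mat_adjoint U * (U * (S * mat_adjoint V)))"
    using U S V' U' by (subst A_eq') (simp add: assoc_mult_mat[of U "dim_row A" r "mat_adjoint U" "dim_row A"
        "U * (S * mat_adjoint V)" "dim_col A"])
  also have "mat_adjoint U * (U * (S * mat_adjoint V)) = S * mat_adjoint V"
    using U' U UU S V' by (rule mult_left_inverse_cancel[OF _ _ _ mult_carrier_mat])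
  also have "U * (S * mat_adjoint V) = A" using A_eq' U S V' by simp
  finally show ?thesis using P_eq' V S' U' by (simp add: is_generalized_inverse_def)
qed

lemma smult_mem_column_space:
  "x \<in> column_space A \<Longrightarrow> c \<cdot>\<^sub>v x \<in> column_space A"
  unfolding column_space_def by (force intro: mult_mat_vec[symmetric])

lemma minimal_outer_decomp_left_mem_column_space:
  assumes gi: "is_generalized_inverse A P" and d: "is_outer_decomp A K us vs"
    and min: "card K = tensor_rank A" and k: "k \<in> K"
  shows "us k \<in> column_space A"
proof -
  let ?R = "A * P"
  have P: "P \<in> carrier_mat (dim_col A) (dim_row A)" and RA: "?R * A = A"
    using gi by (auto simp: is_generalized_inverse_def)
  have R: "?R \<in> carrier_mat (dim_row A) (dim_row A)" using carrier_mat_triv P by (rule mult_carrier_mat)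
  have uk: "us k \<in> carrier_vec (dim_row A)" using d k by (simp add: is_outer_decomp_def)
  txt \<open>Otherwise row \<open>i\<close> of \<open>A = (A P) A\<close> yields a relation among the \<open>vs t\<close>.\<close>
  have Ruk: "?R *\<^sub>v us k = us k"
  proof (rule ccontr)
    assume ne: "?R *\<^sub>v us k \<noteq> us k"
    have "\<exists>i<dim_row A. us k $ i - (?R *\<^sub>v us k) $ i \<noteq> 0"
    proof (rule ccontr)
      assume "\<not> (\<exists>i<dim_row A. us k $ i - (?R *\<^sub>v us k) $ i \<noteq> 0)"
      moreover have "dim_vec (us k) = dim_row A" using uk by (rule carrier_vecD)
      ultimately have "?R *\<^sub>v us k = us k" by (intro eq_vecI) auto
      with ne show False by simp
    qed
    then obtain i where i: "i < dim_row A" and ne_i: "us k $ i - (?R *\<^sub>v us k) $ i \<noteq> 0"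
      by blast
    define lam where "lam t = us t $ i - (?R *\<^sub>v us t) $ i" for t
    have dR: "is_outer_decomp A K (\<lambda>t. ?R *\<^sub>v us t) vs"
      using is_outer_decomp_mult_left[OF d R] RA by simp
    have "(\<Sum>t\<in>K. lam t * vs t $ l) = 0" if l: "l < dim_col A" for l
    proof -
      have "(\<Sum>t\<in>K. lam t * vs t $ l) =
          (\<Sum>t\<in>K. us t $ i * vs t $ l) - (\<Sum>t\<in>K. (?R *\<^sub>v us t) $ i * vs t $ l)"
        unfolding lam_def by (simp add: left_diff_distrib sum_subtractf)
      also have "\<dots> = A $$ (i,l) - A $$ (i,l)"
        using d dR i l by (simp add: is_outer_decomp_def)
      finally show ?thesis by simp
    qed
    from tensor_rank_less_card_if_dependent_right[OF d k _ this] ne_i min show False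
      by (simp add: lam_def)
  qed
  have "us k = A *\<^sub>v (P *\<^sub>v us k)"
    using Ruk assoc_mult_mat_vec[OF carrier_mat_triv P uk] by simp
  moreover have "P *\<^sub>v us k \<in> carrier_vec (dim_col A)" using P uk by (rule mult_mat_vec_carrier)
  ultimately show ?thesis unfolding column_space_def by blast
qed

lemma scalar_prod_generalized_inverse:
  fixes A P :: "'a :: comm_semiring_1 mat"
  assumes gi: "is_generalized_inverse A P"
    and a: "a \<in> carrier_vec (dim_col A)" and b: "b \<in> carrier_vec (dim_row A)"
  shows "(transpose_mat A *\<^sub>v b) \<bullet> (P *\<^sub>v (A *\<^sub>v a)) = b \<bullet> (A *\<^sub>v a)"
proof -
  have P: "P \<in> carrier_mat (dim_col A) (dim_row A)" and APA: "A * P * A = A"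
    using gi by (auto simp: is_generalized_inverse_def)
  have Aa: "A *\<^sub>v a \<in> carrier_vec (dim_row A)" using carrier_mat_triv a by (rule mult_mat_vec_carrier)
  have "(A * P * A) *\<^sub>v a = (A * P) *\<^sub>v (A *\<^sub>v a)"
    using P a by (intro assoc_mult_mat_vec[of _ "dim_row A" "dim_row A" _ "dim_col A"]) auto
  also have "\<dots> = A *\<^sub>v (P *\<^sub>v (A *\<^sub>v a))"
    using P Aa by (intro assoc_mult_mat_vec[of _ "dim_row A" "dim_col A" _ "dim_row A"]) auto
  finally have "A *\<^sub>v (P *\<^sub>v (A *\<^sub>v a)) = A *\<^sub>v a" using APA by simp
  moreover have "(transpose_mat A *\<^sub>v b) \<bullet> (P *\<^sub>v (A *\<^sub>v a)) = b \<bullet> (A *\<^sub>v (P *\<^sub>v (A *\<^sub>v a)))"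
    by (rule transpose_vec_mult_scalar[of A "dim_row A" "dim_col A"])
      (use mult_mat_vec_carrier[OF P Aa] b in auto)
  ultimately show ?thesis by simp
qed

lemma mem_decomposition_locus_iff:
  "(u,v) \<in> decomposition_locus A \<longleftrightarrow> u \<in> carrier_vec (dim_row A) \<and> v \<in> carrier_vec (dim_col A) \<and>
    (\<exists>c. tensor_rank (A - outer (c \<cdot>\<^sub>v u) v) = tensor_rank A - 1)"
  by (simp add: decomposition_locus_def smult_outer)

lemma decomposition_locus_transpose:
  assumes "(u,v) \<in> decomposition_locus A"
  shows "(v,u) \<in> decomposition_locus (transpose_mat A)"
proof -
  from assms obtain c where u: "u \<in> carrier_vec (dim_row A)" and v: "v \<in> carrier_vec (dim_col A)"
    and rk: "tensor_rank (A - c \<cdot>\<^sub>m outer u v) = tensor_rank A - 1"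
    by (auto simp: decomposition_locus_def)
  have "transpose_mat A - c \<cdot>\<^sub>m outer v u = transpose_mat (A - c \<cdot>\<^sub>m outer u v)"
    using carrier_vecD[OF u] carrier_vecD[OF v] by (intro eq_matI) (simp_all add: mult.commute)
  then have "tensor_rank (transpose_mat A - c \<cdot>\<^sub>m outer v u) = tensor_rank (transpose_mat A) - 1"
    using rk by (simp only: tensor_rank_transpose)
  then show ?thesis using u v by (auto simp: decomposition_locus_def)
qed

lemma tensor_rank_mult_left_less:
  assumes T: "T \<in> carrier_mat p (dim_row A)" and a: "a \<in> carrier_vec (dim_col A)"
    and Aa: "A *\<^sub>v a \<noteq> 0\<^sub>v (dim_row A)" and TAa: "T *\<^sub>v (A *\<^sub>v a) = 0\<^sub>v p"
  shows "tensor_rank (T * A) < tensor_rank A"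
proof -
  obtain us vs where d: "is_outer_decomp A {..<tensor_rank A} us vs"
    by (rule obtain_minimal_outer_decomp)
  have dT: "is_outer_decomp (T * A) {..<tensor_rank A} (\<lambda>k. T *\<^sub>v us k) vs"
    using d T by (rule is_outer_decomp_mult_left)
  define p where "p k = vs k \<bullet> a" for k
  have "\<exists>j<tensor_rank A. p j \<noteq> 0"
  proof (rule ccontr)
    assume p0: "\<not> (\<exists>j<tensor_rank A. p j \<noteq> 0)"
    have "(A *\<^sub>v a) $ i = 0" if i: "i < dim_row A" for i
    proof -
      have "(A *\<^sub>v a) $ i = (\<Sum>k<tensor_rank A. us k $ i * p k)"
        using is_outer_decomp_mult_vec[OF d a i] by (simp add: p_def)
      also have "\<dots> = 0" using p0 by (intro sum.neutral) auto
      finally show ?thesis .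
    qed
    then have "A *\<^sub>v a = 0\<^sub>v (dim_row A)" by (intro eq_vecI) auto
    with Aa show False ..
  qed
  then obtain j where j: "j < tensor_rank A" and pj: "p j \<noteq> 0" by blast
  have "(\<Sum>k\<in>{..<tensor_rank A}. p k * (T *\<^sub>v us k) $ i) = 0" if i: "i < dim_row (T * A)" for i
  proof -
    have "(\<Sum>k<tensor_rank A. p k * (T *\<^sub>v us k) $ i) = ((T * A) *\<^sub>v a) $ i"
      using is_outer_decomp_mult_vec[OF dT, of a i] a i by (simp add: p_def mult.commute)
    also have "(T * A) *\<^sub>v a = T *\<^sub>v (A *\<^sub>v a)"
      using T a by (rule assoc_mult_mat_vec[OF _ carrier_mat_triv])
    finally show ?thesis using TAa i carrier_matD(1)[OF T] by simp
  qed
  with j pj have "tensor_rank (T * A) < card {..<tensor_rank A}"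
    by (intro tensor_rank_less_card_if_dependent_left[OF dT, of j p]) auto
  then show ?thesis by simp
qed

lemma one_minus_outer_mult:
  assumes x: "x \<in> carrier_vec (dim_row A)" and b: "b \<in> carrier_vec (dim_row A)"
  shows "(1\<^sub>m (dim_row A) - outer x b) * A = A - outer x (transpose_mat A *\<^sub>v b)"
proof -
  have "(1\<^sub>m (dim_row A) - outer x b) * A = 1\<^sub>m (dim_row A) * A - outer x b * A"
    using x b by (intro minus_mult_distrib_mat[OF _ _ carrier_mat_triv]) auto
  also have "outer x b * A = outer x (transpose_mat A *\<^sub>v b)"
    using b by (intro outer_mult_mat) auto
  finally show ?thesis by simp
qed

lemma one_plus_outer_mult_cancel:
  assumes x: "x \<in> carrier_vec (dim_row A)" and b: "b \<in> carrier_vec (dim_row A)"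
    and xb: "x \<bullet> b = 0"
  shows "(1\<^sub>m (dim_row A) + outer x b) * (A - outer x (transpose_mat A *\<^sub>v b)) = A"
proof -
  define v where "v = transpose_mat A *\<^sub>v b"
  define B where "B = A - outer x v"
  have v: "v \<in> carrier_vec (dim_col A)" unfolding v_def by (rule mult_mat_vec_carrier[OF _ b]) simp
  have xv: "outer x v \<in> carrier_mat (dim_row A) (dim_col A)" using x v by (rule outer_carrier)
  have B: "B \<in> carrier_mat (dim_row A) (dim_col A)" unfolding B_def using xv by (rule minus_carrier_mat)
  have "transpose_mat B = transpose_mat A - outer v x"
    unfolding B_def by (simp add: transpose_minus[OF carrier_mat_triv xv] transpose_outer)
  then have "transpose_mat B *\<^sub>v b = v - outer v x *\<^sub>v b"
    using x v b by (simp add: minus_mult_distrib_mat_vec[of _ "dim_col A" "dim_row A"] v_def)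
  also have "outer v x *\<^sub>v b = 0 \<cdot>\<^sub>v v"
    using x b xb by (simp add: outer_mult_vec)
  also have "\<dots> = 0\<^sub>v (dim_col A)"
    using carrier_vecD[OF v] by (intro eq_vecI) simp_all
  finally have Bb: "transpose_mat B *\<^sub>v b = v"
    using v by simp
  have "(1\<^sub>m (dim_row A) + outer x b) * B = 1\<^sub>m (dim_row A) * B + outer x b * B"
    using x b B by (intro add_mult_distrib_mat) auto
  also have "\<dots> = B + outer x v"
    using B b Bb by (simp add: outer_mult_mat)
  also have "\<dots> = A"
    using carrier_vecD[OF x] carrier_vecD[OF v] unfolding B_def by (intro eq_matI) simp_all
  finally show ?thesis by (simp add: B_def v_def)
qed

lemma mem_decomposition_locus_if_scalar_prod_nonzero:
  assumes a: "a \<in> carrier_vec (dim_col A)" and b: "b \<in> carrier_vec (dim_row A)"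
    and nz: "b \<bullet> (A *\<^sub>v a) \<noteq> 0"
  shows "(A *\<^sub>v a, transpose_mat A *\<^sub>v b) \<in> decomposition_locus A"
proof -
  define u where "u = A *\<^sub>v a"
  define v where "v = transpose_mat A *\<^sub>v b"
  define x where "x = (1 / (b \<bullet> u)) \<cdot>\<^sub>v u"
  have u: "u \<in> carrier_vec (dim_row A)" unfolding u_def using carrier_mat_triv a by (rule mult_mat_vec_carrier)
  have v: "v \<in> carrier_vec (dim_col A)" unfolding v_def by (rule mult_mat_vec_carrier[OF _ b]) simp
  have x: "x \<in> carrier_vec (dim_row A)" using u by (simp add: x_def)
  have T: "1\<^sub>m (dim_row A) - outer x b \<in> carrier_mat (dim_row A) (dim_row A)"
    using outer_carrier[OF x b] by (rule minus_carrier_mat)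
  have "(1\<^sub>m (dim_row A) - outer x b) *\<^sub>v u = u - outer x b *\<^sub>v u"
    using x b u by (subst minus_mult_distrib_mat_vec) auto
  also have "outer x b *\<^sub>v u = u"
    using b u nz by (simp add: outer_mult_vec x_def u_def smult_smult_assoc)
  finally have "(1\<^sub>m (dim_row A) - outer x b) *\<^sub>v (A *\<^sub>v a) = 0\<^sub>v (dim_row A)"
    using u by (simp add: u_def)
  moreover have "A *\<^sub>v a \<noteq> 0\<^sub>v (dim_row A)" using nz b by auto
  ultimately have "tensor_rank (A - outer x v) < tensor_rank A"
    using tensor_rank_mult_left_less[OF T a] one_minus_outer_mult[OF x b] by (simp add: v_def)
  moreover have "tensor_rank A \<le> Suc (tensor_rank (A - outer x v))"
    using x v by (rule tensor_rank_le_Suc_minus_outer)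
  ultimately have "tensor_rank (A - outer x v) = tensor_rank A - 1" by simp
  then show ?thesis
    using u v unfolding mem_decomposition_locus_iff x_def u_def v_def by blast
qed

lemma decomposition_locus_fst_mem_column_space:
  assumes gi: "is_generalized_inverse A P" and r: "tensor_rank A \<ge> 1"
    and uv: "(u,v) \<in> decomposition_locus A"
  shows "u \<in> column_space A"
proof -
  from uv obtain c where u: "u \<in> carrier_vec (dim_row A)" and v: "v \<in> carrier_vec (dim_col A)"
    and rk: "tensor_rank (A - outer (c \<cdot>\<^sub>v u) v) = tensor_rank A - 1"
    unfolding mem_decomposition_locus_iff by blast
  let ?s = "tensor_rank A - 1"
  have cu: "c \<cdot>\<^sub>v u \<in> carrier_vec (dim_row A)" using u by simp
  obtain us vs where "is_outer_decomp (A - outer (c \<cdot>\<^sub>v u) v)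
      {..<tensor_rank (A - outer (c \<cdot>\<^sub>v u) v)} us vs"
    by (rule obtain_minimal_outer_decomp)
  then have "is_outer_decomp A (insert ?s {..<?s}) (us(?s := c \<cdot>\<^sub>v u)) (vs(?s := v))"
    unfolding rk by (rule is_outer_decomp_insert) (use cu v in auto)
  moreover have "insert ?s {..<?s} = {..<tensor_rank A}" using r by auto
  ultimately have d: "is_outer_decomp A {..<tensor_rank A} (us(?s := c \<cdot>\<^sub>v u)) (vs(?s := v))"
    by simp
  have "(us(?s := c \<cdot>\<^sub>v u)) ?s \<in> column_space A"
    using r by (intro minimal_outer_decomp_left_mem_column_space[OF gi d]) auto
  then have cu_col: "c \<cdot>\<^sub>v u \<in> column_space A" by simp
  have "c \<noteq> 0"
  proof
    assume "c = 0"
    then have "A - outer (c \<cdot>\<^sub>v u) v = A"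
      using carrier_vecD[OF u] carrier_vecD[OF v] by (intro eq_matI) simp_all
    with rk r show False by simp
  qed
  moreover have "(1 / c) \<cdot>\<^sub>v (c \<cdot>\<^sub>v u) \<in> column_space A"
    using cu_col by (rule smult_mem_column_space)
  ultimately show ?thesis by (simp add: smult_smult_assoc)
qed

lemma scalar_prod_nonzero_if_mem_decomposition_locus:
  assumes r: "tensor_rank A \<ge> 1" and uv: "(u,v) \<in> decomposition_locus A"
    and b: "b \<in> carrier_vec (dim_row A)" and v_eq: "v = transpose_mat A *\<^sub>v b"
  shows "b \<bullet> u \<noteq> 0"
proof
  assume bu: "b \<bullet> u = 0"
  from uv obtain c where u: "u \<in> carrier_vec (dim_row A)"
    and rk: "tensor_rank (A - outer (c \<cdot>\<^sub>v u) v) = tensor_rank A - 1"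
    unfolding mem_decomposition_locus_iff by blast
  have x: "c \<cdot>\<^sub>v u \<in> carrier_vec (dim_row A)" using u by simp
  have "(c \<cdot>\<^sub>v u) \<bullet> b = 0"
    using u b bu by (simp add: comm_scalar_prod[of u "dim_row A" b])
  then have "(1\<^sub>m (dim_row A) + outer (c \<cdot>\<^sub>v u) b) * (A - outer (c \<cdot>\<^sub>v u) v) = A"
    unfolding v_eq using x b by (rule one_plus_outer_mult_cancel[rotated 2])
  moreover have "1\<^sub>m (dim_row A) + outer (c \<cdot>\<^sub>v u) b
      \<in> carrier_mat (dim_row A) (dim_row (A - outer (c \<cdot>\<^sub>v u) v))"
    using outer_carrier[OF x b] carrier_vecD[OF x] by (intro add_carrier_mat) auto
  ultimately have "tensor_rank A \<le> tensor_rank (A - outer (c \<cdot>\<^sub>v u) v)"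
    by (metis tensor_rank_mult_left_le)
  with rk r show False by simp
qed

lemma decomposition_locus_generalized_inverse:
  assumes gi: "is_generalized_inverse A P" and r: "tensor_rank A \<ge> 1"
  shows "decomposition_locus A = {(u,v). u \<in> column_space A \<and> v \<in> column_space (transpose_mat A) \<and>
    v \<bullet> (P *\<^sub>v u) \<noteq> 0}"
proof -
  have "(u,v) \<in> decomposition_locus A \<longleftrightarrow>
      u \<in> column_space A \<and> v \<in> column_space (transpose_mat A) \<and> v \<bullet> (P *\<^sub>v u) \<noteq> 0" for u v
  proof
    assume uv: "(u,v) \<in> decomposition_locus A"
    have u: "u \<in> column_space A"
      using gi r uv by (rule decomposition_locus_fst_mem_column_space)
    have v: "v \<in> column_space (transpose_mat A)"
      using decomposition_locus_fst_mem_column_space[OF is_generalized_inverse_transpose[OF gi] _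
          decomposition_locus_transpose[OF uv]] r
      by (simp add: tensor_rank_transpose)
    obtain a b where a: "a \<in> carrier_vec (dim_col A)" "u = A *\<^sub>v a"
      and b: "b \<in> carrier_vec (dim_row A)" "v = transpose_mat A *\<^sub>v b"
      using u v by (auto simp: column_space_def)
    have "v \<bullet> (P *\<^sub>v u) = b \<bullet> u"
      using scalar_prod_generalized_inverse[OF gi a(1) b(1)] a(2) b(2) by simp
    moreover have "b \<bullet> u \<noteq> 0"
      using r uv b by (rule scalar_prod_nonzero_if_mem_decomposition_locus)
    ultimately show "u \<in> column_space A \<and> v \<in> column_space (transpose_mat A) \<and> v \<bullet> (P *\<^sub>v u) \<noteq> 0"
      using u v by simp
  next
    assume "u \<in> column_space A \<and> v \<in> column_space (transpose_mat A) \<and> v \<bullet> (P *\<^sub>v u) \<noteq> 0"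
    then obtain a b where a: "a \<in> carrier_vec (dim_col A)" "u = A *\<^sub>v a"
      and b: "b \<in> carrier_vec (dim_row A)" "v = transpose_mat A *\<^sub>v b"
      and nz: "v \<bullet> (P *\<^sub>v u) \<noteq> 0"
      by (auto simp: column_space_def)
    have "b \<bullet> (A *\<^sub>v a) \<noteq> 0"
      using scalar_prod_generalized_inverse[OF gi a(1) b(1)] a(2) b(2) nz by simp
    then show "(u,v) \<in> decomposition_locus A"
      using mem_decomposition_locus_if_scalar_prod_nonzero[OF a(1) b(1)] a(2) b(2) by simp
  qed
  then show ?thesis by auto
qed

theorem proposition3p1:
  fixes A P :: "complex mat" and m n r :: nat
  assumes "A \<in> carrier_mat m n"
    and "tensor_rank A = r" and "r \<ge> 1"
    and "is_pinv_svd A P"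
  shows "decomposition_locus A =
    {(u,v). u \<in> column_space A \<and> v \<in> column_space (transpose_mat A) \<and> v \<bullet> (P *\<^sub>v u) \<noteq> 0}"
  using decomposition_locus_generalized_inverse[OF is_pinv_svd_generalized_inverse[OF assms(4)]]
    assms(2,3) by simp

end
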